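(* Let $n\ge1$ and let $f$ be an automorphism of the additive group $\mathbb{Z}^n$. If $f$ has cycles of lengths $\alpha$ and $\beta$, each different from the zero cycle $\{0\}$, then $f$ has a cycle of length $\mathrm{lcm}(\alpha,\beta)$.
   Context: For a bijection $f$ of a set, a cycle is a finite sequence $a_1,\dots,a_m$ of distinct elements with $f(a_j)=a_{j+1}$ for $j<m$ and $f(a_m)=a_1$; its length is $m$. The zero cycle of an automorphism of $\mathbb{Z}^n$ is the fixed point $0$. *)

theory Defs
  imports "HOL-Analysis.Finite_Cartesian_Product"
begin

definition is_cycle :: "('a \<Rightarrow> 'a) \<Rightarrow> 'a list \<Rightarrow> bool" where
  "is_cycle f xs \<longleftrightarrow> xs \<noteq> [] \<and> distinct xs \<and>
     (\<forall>j < length xs. f (xs ! j) = xs ! (Suc j mod length xs))"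

end

theory Submission
  imports Defs
begin

text \<open>Take x and y on the two cycles, of periods a and b, and put z = x + c y for an integer c.
  For 0 < k < lcm a b, the iterate f^k fails to fix x or y, so the additive map f^k - id
  sends y to a nonzero vector w; the equation f^k z = z then reads (f^k x - x) + c w = 0,
  which, Z^n being torsion free, holds for at most one c. Avoiding these finitely many bad
  values of c makes z a point of exact period lcm a b, and its orbit is the required cycle.\<close>

lemma is_cycle_funpow_nth:
  assumes "is_cycle f xs"
  shows "(f ^^ k) (xs ! 0) = xs ! (k mod length xs)"
proof (induction k)
  case (Suc k)
  have "k mod length xs < length xs"
    using assms unfolding is_cycle_def by simp
  then have "f (xs ! (k mod length xs)) = xs ! (Suc (k mod length xs) mod length xs)"
    using assms unfolding is_cycle_def by blast
  then show ?case
    using Suc by (simp add: mod_Suc_eq)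
qed simp

lemma is_cycle_funpow_eq_iff:
  assumes "is_cycle f xs"
  shows "(f ^^ k) (xs ! 0) = xs ! 0 \<longleftrightarrow> length xs dvd k"
proof -
  have "distinct xs" and "length xs > 0"
    using assms unfolding is_cycle_def by auto
  then have "xs ! (k mod length xs) = xs ! 0 \<longleftrightarrow> k mod length xs = 0"
    by (simp add: nth_eq_iff_index_eq)
  then show ?thesis
    by (simp add: is_cycle_funpow_nth[OF assms] dvd_eq_mod_eq_0)
qed

text \<open>A periodic point with exact period n yields a cycle; f need not be injective, since a
  coincidence of two orbit points is pushed forward to a return to z before time n.\<close>

lemma is_cycle_orbit:
  assumes "0 < n" and period: "(f ^^ n) z = z"
    and exact: "\<And>k. 0 < k \<Longrightarrow> k < n \<Longrightarrow> (f ^^ k) z \<noteq> z"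
  shows "is_cycle f (map (\<lambda>i. (f ^^ i) z) [0..<n])"
proof -
  have no_repeat: "i = j" if "i < j" "j < n" and eq: "(f ^^ i) z = (f ^^ j) z" for i j
  proof -
    have "(f ^^ (n - j + i)) z = (f ^^ (n - j)) ((f ^^ i) z)"
      by (simp add: funpow_add)
    also have "\<dots> = (f ^^ (n - j)) ((f ^^ j) z)"
      by (simp only: eq)
    also have "\<dots> = (f ^^ (n - j + j)) z"
      by (simp add: funpow_add)
    also have "\<dots> = z"
      using \<open>j < n\<close> period by simp
    finally have "(f ^^ (n - j + i)) z = z" .
    moreover have "0 < n - j + i" and "n - j + i < n"
      using that by auto
    ultimately show ?thesis
      using exact[of "n - j + i"] by auto
  qed
  have "inj_on (\<lambda>i. (f ^^ i) z) {0..<n}"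
  proof (rule inj_onI)
    fix i j
    assume "i \<in> {0..<n}" "j \<in> {0..<n}" and "(f ^^ i) z = (f ^^ j) z"
    then show "i = j"
      using no_repeat[of i j] no_repeat[of j i] by (cases i j rule: linorder_cases) auto
  qed
  moreover have "f ((f ^^ j) z) = (f ^^ (Suc j mod n)) z" if "j < n" for j
    using that period by (cases "Suc j = n") auto
  ultimately show ?thesis
    using \<open>0 < n\<close> unfolding is_cycle_def by (simp add: distinct_map)
qed

lemma additive_funpow:
  fixes f :: "'a::ab_group_add \<Rightarrow> 'a"
  assumes "additive f"
  shows "additive (f ^^ k)"
  using assms by (induction k) (simp_all add: additive_def)

lemma additive_of_int_mult:
  fixes g :: "'a::ring_1 \<Rightarrow> 'b::ring_1"
  assumes "additive g"
  shows "g (of_int c * v) = of_int c * g v"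
proof (induction c rule: int_induct[where k = 0])
  case base
  show ?case
    using additive.zero[OF assms] by simp
next
  case (step1 i)
  then show ?case
    by (simp add: distrib_right additive.add[OF assms])
next
  case (step2 i)
  then show ?case
    by (simp add: left_diff_distrib additive.diff[OF assms])
qed

lemma of_int_vec_nth [simp]: "(of_int c :: 'a::ring_1 ^ 'n) $ i = of_int c"
  by (induction c rule: int_induct[where k = 0]) simp_all

lemma of_int_mult_vec_cancel:
  fixes v :: "'a::{idom,ring_char_0} ^ 'n"
  assumes "v \<noteq> 0" and "of_int c * v = of_int d * v"
  shows "c = d"
proof -
  obtain i where "v $ i \<noteq> 0"
    using assms(1) by (auto simp: vec_eq_iff)
  moreover have "of_int c * v $ i = of_int d * v $ i"
    using arg_cong[OF assms(2), of "\<lambda>u. u $ i"] by simp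
  ultimately show ?thesis
    by simp
qed

lemma additive_fixes_unique_combination:
  fixes g :: "'a::{idom,ring_char_0} ^ 'n \<Rightarrow> 'a ^ 'n"
  assumes "additive g" and moved: "g x \<noteq> x \<or> g y \<noteq> y"
    and fix_c: "g (x + of_int c * y) = x + of_int c * y"
    and fix_d: "g (x + of_int d * y) = x + of_int d * y"
  shows "c = d"
proof -
  define w where "w = g y - y"
  have balance: "g x - x + of_int e * w = 0"
    if "g (x + of_int e * y) = x + of_int e * y" for e
  proof -
    have "g x + of_int e * g y = x + of_int e * y"
      using that by (simp add: additive.add[OF assms(1)] additive_of_int_mult[OF assms(1)])
    then show ?thesis
      unfolding w_def by (simp add: algebra_simps)
  qed
  have "w \<noteq> 0"
    using moved balance[OF fix_c] unfolding w_def by auto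
  moreover have "of_int c * w = of_int d * w"
    using balance[OF fix_c] balance[OF fix_d] by (metis add_left_cancel)
  ultimately show ?thesis
    by (rule of_int_mult_vec_cancel)
qed

lemma additive_exact_period_lcm:
  fixes f :: "'a::{idom,ring_char_0} ^ 'n \<Rightarrow> 'a ^ 'n"
  assumes "additive f"
    and period_x: "\<And>k. (f ^^ k) x = x \<longleftrightarrow> a dvd k"
    and period_y: "\<And>k. (f ^^ k) y = y \<longleftrightarrow> b dvd k"
  obtains z where "(f ^^ lcm a b) z = z"
    and "\<And>k. 0 < k \<Longrightarrow> k < lcm a b \<Longrightarrow> (f ^^ k) z \<noteq> z"
proof -
  let ?L = "lcm a b"
  define bad where "bad k = {c. (f ^^ k) (x + of_int c * y) = x + of_int c * y}" for k
  have "finite (bad k)" if "0 < k" "k < ?L" for k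
  proof -
    have "(f ^^ k) x \<noteq> x \<or> (f ^^ k) y \<noteq> y"
      using that period_x period_y by (auto dest: nat_dvd_not_less)
    then have unique: "c = d" if "c \<in> bad k" "d \<in> bad k" for c d
      using that additive_fixes_unique_combination[OF additive_funpow[OF assms(1)]]
      unfolding bad_def by blast
    show ?thesis
    proof (cases "bad k = {}")
      case False
      then obtain c where "c \<in> bad k"
        by blast
      with unique have "bad k \<subseteq> {c}"
        by blast
      then show ?thesis
        by (rule finite_subset) simp
    qed simp
  qed
  then have "finite (\<Union>k\<in>{0<..<?L}. bad k)"
    by auto
  then obtain c where c: "c \<notin> (\<Union>k\<in>{0<..<?L}. bad k)"
    using ex_new_if_finite[OF infinite_UNIV_int] by blast
  have "additive (f ^^ ?L)"
    by (rule additive_funpow[OF assms(1)])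
  then have "(f ^^ ?L) (x + of_int c * y) = x + of_int c * y"
    using period_x[of ?L] period_y[of ?L] by (simp add: additive.add additive_of_int_mult)
  moreover have "(f ^^ k) (x + of_int c * y) \<noteq> x + of_int c * y" if "0 < k" "k < ?L" for k
    using c that unfolding bad_def by auto
  ultimately show ?thesis
    by (rule that)
qed

theorem theorem3p8:
  fixes f :: "int ^ 'n \<Rightarrow> int ^ 'n" and xs ys :: "(int ^ 'n) list"
  assumes "bij f"
    and "\<And>x y. f (x + y) = f x + f y"
    and "is_cycle f xs" and "xs \<noteq> [0]"
    and "is_cycle f ys" and "ys \<noteq> [0]"
  shows "\<exists>zs. is_cycle f zs \<and> length zs = lcm (length xs) (length ys)"
proof -
  have "additive f"
    using assms(2) by (rule additive.intro)
  then obtain z where period: "(f ^^ lcm (length xs) (length ys)) z = z"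
    and exact: "\<And>k. 0 < k \<Longrightarrow> k < lcm (length xs) (length ys) \<Longrightarrow> (f ^^ k) z \<noteq> z"
    using additive_exact_period_lcm is_cycle_funpow_eq_iff[OF assms(3)]
      is_cycle_funpow_eq_iff[OF assms(5)] by blast
  have "0 < lcm (length xs) (length ys)"
    using assms(3,5) unfolding is_cycle_def by (simp add: lcm_pos_nat)
  then have "is_cycle f (map (\<lambda>i. (f ^^ i) z) [0..<lcm (length xs) (length ys)])"
    using period exact by (rule is_cycle_orbit)
  then show ?thesis
    by (intro exI[where x = "map (\<lambda>i. (f ^^ i) z) [0..<lcm (length xs) (length ys)]"]) simp
qed

end
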